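(* Let $f : \{0, 1\}^n \to \{0, 1\}$ be a Boolean function. Then $\mathsf{Pat}^{\mathsf{M}}(f) \geq \mathrm{spar}(f)$.
   Context: Every $f:\{0,1\}^n\to\{0,1\}$ has a unique M\"obius expansion $f=\sum_{S\subseteq[n]}\widetilde f(S)\mathsf{AND}_S$ with real coefficients, where $\mathsf{AND}_S(x)=\prod_{i\in S}x_i$; its M\"obius support is $\mathcal{S}_f=\{S:\widetilde f(S)\ne0\}$ and its M\"obius sparsity is $\mathrm{spar}(f)=|\mathcal S_f|$. The pattern of $x$ is $(\mathsf{AND}_S(x))_{S\in\mathcal S_f}$, and $\mathsf{Pat}^{\mathsf{M}}(f)$ is the number of distinct patterns over all $x\in\{0,1\}^n$. *)

theory Defs
  imports Complex_Main
begin

text \<open>Inputs x in {0,1}^n are bool lists of length n (x_i = 1 iff x ! i);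
  coordinates are indexed by {..<n}.\<close>

definition cube :: "nat \<Rightarrow> bool list set" where
  "cube n = {xs. length xs = n}"

definition AND :: "nat set \<Rightarrow> bool list \<Rightarrow> real" where
  "AND S x = (\<Prod>i\<in>S. if x ! i then 1 else 0)"

definition is_mobius_expansion :: "nat \<Rightarrow> (bool list \<Rightarrow> bool) \<Rightarrow> (nat set \<Rightarrow> real) \<Rightarrow> bool" where
  "is_mobius_expansion n f c \<longleftrightarrow>
     (\<forall>S. \<not> S \<subseteq> {..<n} \<longrightarrow> c S = 0) \<and>
     (\<forall>x\<in>cube n. (if f x then 1 else 0) = (\<Sum>S\<in>Pow {..<n}. c S * AND S x))"

definition mobius_coeff :: "nat \<Rightarrow> (bool list \<Rightarrow> bool) \<Rightarrow> nat set \<Rightarrow> real" where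
  "mobius_coeff n f = (THE c. is_mobius_expansion n f c)"

definition mobius_support :: "nat \<Rightarrow> (bool list \<Rightarrow> bool) \<Rightarrow> nat set set" where
  "mobius_support n f = {S \<in> Pow {..<n}. mobius_coeff n f S \<noteq> 0}"

definition spar :: "nat \<Rightarrow> (bool list \<Rightarrow> bool) \<Rightarrow> nat" where
  "spar n f = card (mobius_support n f)"

definition pattern :: "nat \<Rightarrow> (bool list \<Rightarrow> bool) \<Rightarrow> bool list \<Rightarrow> nat set \<Rightarrow> real" where
  "pattern n f x = (\<lambda>S. if S \<in> mobius_support n f then AND S x else 0)"

definition PatM :: "nat \<Rightarrow> (bool list \<Rightarrow> bool) \<Rightarrow> nat" where
  "PatM n f = card (pattern n f ` cube n)"

end

theory Submission
  imports Defs
begin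

text \<open>Evaluating the pattern at the indicator vector of a support set S reveals which support
  sets are contained in S. Since every support set T satisfies AND_T(1_T) = 1, two support
  sets with equal patterns contain each other, so S \<mapsto> pattern(1_S) is injective on the support.
  This uses nothing about f: it holds for every family of subsets of [n].\<close>

definition indicator_list :: "nat \<Rightarrow> nat set \<Rightarrow> bool list" where
  "indicator_list n S = map (\<lambda>i. i \<in> S) [0..<n]"

lemma indicator_list_in_cube: "indicator_list n S \<in> cube n"
  by (simp add: indicator_list_def cube_def)

lemma finite_cube: "finite (cube n)"
  using finite_lists_length_eq[of "UNIV :: bool set" n] by (simp add: cube_def)

lemma AND_indicator_list:
  assumes "T \<subseteq> {..<n}"
  shows "AND T (indicator_list n S) = (if T \<subseteq> S then 1 else 0)"
proof -
  have "AND T (indicator_list n S) = (\<Prod>i\<in>T. if i \<in> S then 1 else 0)"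
    unfolding AND_def using assms by (intro prod.cong) (auto simp: indicator_list_def)
  moreover have "finite T"
    using assms finite_subset by blast
  ultimately show ?thesis
    by (auto simp: prod_zero subset_iff intro!: prod.neutral)
qed

lemma card_family_le_card_patterns:
  fixes F :: "nat set set"
  assumes F: "F \<subseteq> Pow {..<n}"
  shows "card F \<le> card ((\<lambda>x T. if T \<in> F then AND T x else 0) ` cube n)"
    (is "_ \<le> card (?pat ` _)")
proof -
  have contained: "S \<subseteq> S'"
    if "S \<in> F" "S' \<in> F" "?pat (indicator_list n S) = ?pat (indicator_list n S')" for S S'
  proof -
    have "?pat (indicator_list n S') S = 1"
      using that F fun_cong[OF that(3), of S] by (auto simp: AND_indicator_list)
    moreover have "AND S (indicator_list n S') = (if S \<subseteq> S' then 1 else 0)"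
      using that(1) F by (intro AND_indicator_list) auto
    ultimately show ?thesis
      using that(1) by (auto split: if_splits)
  qed
  have "inj_on (\<lambda>S. ?pat (indicator_list n S)) F"
    by (rule inj_onI) (metis contained subset_antisym)
  moreover have "(\<lambda>S. ?pat (indicator_list n S)) ` F \<subseteq> ?pat ` cube n"
    using indicator_list_in_cube by blast
  ultimately show ?thesis
    by (intro card_inj_on_le) (simp_all add: finite_cube)
qed

theorem claim4p2:
  fixes n :: nat and f :: "bool list \<Rightarrow> bool"
  shows "PatM n f \<ge> spar n f"
proof -
  have "mobius_support n f \<subseteq> Pow {..<n}"
    by (auto simp: mobius_support_def)
  moreover have "pattern n f = (\<lambda>x S. if S \<in> mobius_support n f then AND S x else 0)"
    by (simp add: pattern_def fun_eq_iff)
  ultimately show ?thesis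
    unfolding PatM_def spar_def by (simp add: card_family_le_card_patterns)
qed

end
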